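(* Let $\mathcal{X},\mathcal{Y}$ be stationary finite Markov chains, $C:{\bm X}\times{\bm Y}\to\mathbb{R}_+$ a cost function, and $p$ a probability distribution on $\mathbb{N}$ with $p(t)>0$ for all $t\in\mathbb{N}$. Then $d_{\mathrm{OTC}}(\mathcal{X},\mathcal{Y};C)=0$ if and only if $d^{p}_{\mathrm{OTM}}(\mathcal{X},\mathcal{Y};C)=0$.
   Context: A finite Markov chain $\mathcal{X}=({\bm X},m^{\bm X}_\bullet,\nu^{\bm X})$ consists of a finite set ${\bm X}$, a transition kernel $m^{\bm X}_\bullet:{\bm X}\to\mathcal{P}({\bm X})$ and an initial distribution $\nu^{\bm X}$; it is stationary if $\nu^{\bm X}$ is stationary for $m^{\bm X}_\bullet$. $\mathcal{C}(\alpha,\beta)$ denotes the set of couplings of $\alpha,\beta$. A Markovian coupling between $\mathcal{X}$ and $\mathcal{Y}$ is a (possibly time-inhomogeneous) Markov chain $(X_t,Y_t)_{t\in\mathbb{N}}$ on ${\bm X}\times{\bm Y}$ with $\mathrm{law}(X_0,Y_0)\in\mathcal{C}(\nu^{\bm X},\nu^{\bm Y})$ and, for all $t,x,y$, the conditional law of $(X_{t+1},Y_{t+1})$ given $(X_t,Y_t)=(x,y)$ in $\mathcal{C}(m^{\bm X}_x,m^{\bm Y}_y)$; it is time homogeneous if these conditional laws do not depend on $t$. For $p\in\mathcal{P}(\mathbb{N})$ and $T\sim p$, $d^{p}_{\mathrm{OTM}}(\mathcal{X},\mathcal{Y};C)=\inf\mathbb{E}\,C(X_T,Y_T)$ over all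 Markovian couplings independent of $T$. $d_{\mathrm{OTC}}(\mathcal{X},\mathcal{Y};C)=\inf\mathbb{E}\,C(X_0,Y_0)$ over all time homogeneous Markovian couplings whose initial distribution is stationary for the coupled chain. *)

theory Defs
  imports "HOL-Probability.Probability"
begin

text \<open>A finite Markov chain on a finite type 'a is given by a transition kernel
  m :: 'a \<Rightarrow> 'a pmf and an initial distribution nu :: 'a pmf.\<close>

definition stationary :: "('a \<Rightarrow> 'a pmf) \<Rightarrow> 'a pmf \<Rightarrow> bool" where
  "stationary m nu \<longleftrightarrow> bind_pmf nu m = nu"

definition couplings :: "'a pmf \<Rightarrow> 'b pmf \<Rightarrow> ('a \<times> 'b) pmf set" where
  "couplings \<alpha> \<beta> = {\<gamma>. map_pmf fst \<gamma> = \<alpha> \<and> map_pmf snd \<gamma> = \<beta>}"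

fun chain_law :: "('c pmf) \<Rightarrow> (nat \<Rightarrow> 'c \<Rightarrow> 'c pmf) \<Rightarrow> nat \<Rightarrow> 'c pmf" where
  "chain_law pi0 K 0 = pi0"
| "chain_law pi0 K (Suc t) = bind_pmf (chain_law pi0 K t) (K t)"

definition markovian_coupling ::
  "('x \<Rightarrow> 'x pmf) \<Rightarrow> 'x pmf \<Rightarrow> ('y \<Rightarrow> 'y pmf) \<Rightarrow> 'y pmf
   \<Rightarrow> ('x \<times> 'y) pmf \<Rightarrow> (nat \<Rightarrow> 'x \<times> 'y \<Rightarrow> ('x \<times> 'y) pmf) \<Rightarrow> bool" where
  "markovian_coupling mX nuX mY nuY pi0 K \<longleftrightarrow>
     pi0 \<in> couplings nuX nuY \<and>
     (\<forall>t x y. K t (x, y) \<in> couplings (mX x) (mY y))"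

definition stationary_markovian_coupling ::
  "('x \<Rightarrow> 'x pmf) \<Rightarrow> 'x pmf \<Rightarrow> ('y \<Rightarrow> 'y pmf) \<Rightarrow> 'y pmf
   \<Rightarrow> ('x \<times> 'y) pmf \<Rightarrow> ('x \<times> 'y \<Rightarrow> ('x \<times> 'y) pmf) \<Rightarrow> bool" where
  "stationary_markovian_coupling mX nuX mY nuY pi0 K \<longleftrightarrow>
     markovian_coupling mX nuX mY nuY pi0 (\<lambda>_. K) \<and> stationary K pi0"

text \<open>d^p_OTM: infimum over Markovian couplings (independent of T ~ p) of E C(X_T, Y_T).\<close>
definition d_OTM ::
  "nat pmf \<Rightarrow> ('x \<Rightarrow> 'x pmf) \<Rightarrow> 'x pmf \<Rightarrow> ('y \<Rightarrow> 'y pmf) \<Rightarrow> 'y pmf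
   \<Rightarrow> ('x \<Rightarrow> 'y \<Rightarrow> real) \<Rightarrow> real" where
  "d_OTM p mX nuX mY nuY C =
     (INF (pi0, K) \<in> {(pi0, K). markovian_coupling mX nuX mY nuY pi0 K}.
        measure_pmf.expectation (bind_pmf p (\<lambda>t. chain_law pi0 K t)) (\<lambda>(x, y). C x y))"

definition d_OTC ::
  "('x \<Rightarrow> 'x pmf) \<Rightarrow> 'x pmf \<Rightarrow> ('y \<Rightarrow> 'y pmf) \<Rightarrow> 'y pmf
   \<Rightarrow> ('x \<Rightarrow> 'y \<Rightarrow> real) \<Rightarrow> real" where
  "d_OTC mX nuX mY nuY C =
     (INF (pi0, K) \<in> {(pi0, K). stationary_markovian_coupling mX nuX mY nuY pi0 K}.
        measure_pmf.expectation pi0 (\<lambda>(x, y). C x y))"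

end

theory Submission
  imports Defs
begin

(* If the chains can be coupled with arbitrarily small expected cost at a p-distributed time,
   then, since p charges every time, they can be coupled with cost at most 1/(n+1) at each of
   the times 0..n.  Averaging the joint laws of consecutive states (Z_t, Z_(t+1)) over t <= n
   gives a flow on pairs of joint states whose rows are scaled couplings of the transition
   kernels and whose source marginals couple the stationary laws; it is stationary up to an
   error 1/(n+1) and has cost at most 1/(n+1).  A limit point of these flows is an exactly
   stationary flow of zero cost, and normalising its rows yields a stationary time-homogeneous
   Markovian coupling of zero cost.  The converse holds because a stationary coupling has the
   same law at every time. *)

section \<open>Finite probability mass functions\<close>

lemma expectation_finite:
  fixes M :: "'a::finite pmf" and f :: "'a \<Rightarrow> real"
  shows "measure_pmf.expectation M f = (\<Sum>z\<in>UNIV. pmf M z * f z)"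
  by (subst integral_measure_pmf_real[where A=UNIV]) (auto simp: mult.commute)

lemma pmf_bind_finite:
  fixes M :: "'a::finite pmf"
  shows "pmf (bind_pmf M f) z = (\<Sum>w\<in>UNIV. pmf M w * pmf (f w) z)"
  by (simp add: pmf_bind expectation_finite)

lemma pmf_map_fst_finite:
  fixes M :: "('a \<times> 'b::finite) pmf"
  shows "pmf (map_pmf fst M) x = (\<Sum>y\<in>UNIV. pmf M (x, y))"
proof -
  have "pmf (map_pmf fst M) x = measure M (range (Pair x))"
    unfolding pmf_map by (rule arg_cong[where f="measure M"]) auto
  also have "\<dots> = (\<Sum>y\<in>UNIV. pmf M (x, y))"
    by (simp add: measure_measure_pmf_finite sum.reindex inj_on_def)
  finally show ?thesis .
qed

lemma pmf_map_snd_finite: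
  fixes M :: "('a::finite \<times> 'b) pmf"
  shows "pmf (map_pmf snd M) y = (\<Sum>x\<in>UNIV. pmf M (x, y))"
proof -
  have "pmf (map_pmf snd M) y = measure M (range (\<lambda>x. (x, y)))"
    unfolding pmf_map by (rule arg_cong[where f="measure M"]) auto
  also have "\<dots> = (\<Sum>x\<in>UNIV. pmf M (x, y))"
    by (simp add: measure_measure_pmf_finite sum.reindex inj_on_def)
  finally show ?thesis .
qed

lemma pmf_embed_pmf_finite:
  fixes f :: "'a::finite \<Rightarrow> real"
  assumes "\<And>z. 0 \<le> f z" "(\<Sum>z\<in>UNIV. f z) = 1"
  shows "pmf (embed_pmf f) z = f z"
  by (rule pmf_embed_pmf) (use assms in \<open>auto simp: nn_integral_count_space_finite\<close>)

lemma pmf_mult_le_pmf_bind: "pmf p t * pmf (f t) z \<le> pmf (bind_pmf p f) z"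
proof -
  have "pmf p t * pmf (f t) z = measure_pmf.expectation p (\<lambda>s. indicator {t} s * pmf (f t) z)"
    by (subst integral_measure_pmf_real[where A="{t}"]) (auto simp: indicator_def)
  also have "\<dots> \<le> measure_pmf.expectation p (\<lambda>s. pmf (f s) z)"
    by (intro integral_mono measure_pmf.integrable_const_bound[where B=1])
       (auto simp: pmf_le_1 split: split_indicator)
  finally show ?thesis by (simp add: pmf_bind)
qed

lemma expectation_mult_le_expectation_bind:
  fixes c :: "'a::finite \<Rightarrow> real"
  assumes "\<And>z. 0 \<le> c z"
  shows "pmf p t * measure_pmf.expectation (f t) c \<le> measure_pmf.expectation (bind_pmf p f) c"
  unfolding expectation_finite sum_distrib_left
  by (intro sum_mono) (simp add: assms mult.assoc[symmetric] mult_right_mono pmf_mult_le_pmf_bind)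

lemma bind_pair_pmf_pair_pmf:
  "bind_pmf (pair_pmf A B) (\<lambda>(x, y). pair_pmf (f x) (g y)) = pair_pmf (bind_pmf A f) (bind_pmf B g)"
proof -
  have "bind_pmf (pair_pmf A B) (\<lambda>(x, y). pair_pmf (f x) (g y)) =
      bind_pmf A (\<lambda>x. bind_pmf B (\<lambda>y. bind_pmf (f x) (\<lambda>x'. bind_pmf (g y) (\<lambda>y'. return_pmf (x', y')))))"
    by (simp add: pair_pmf_def bind_assoc_pmf bind_return_pmf)
  also have "\<dots> = bind_pmf A (\<lambda>x. bind_pmf (f x) (\<lambda>x'. bind_pmf B (\<lambda>y. bind_pmf (g y) (\<lambda>y'. return_pmf (x', y')))))"
    by (subst bind_commute_pmf) (rule refl)
  finally show ?thesis
    by (simp add: pair_pmf_def bind_assoc_pmf)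
qed

section \<open>Coupling flows\<close>

definition flow_out :: "('z::finite \<Rightarrow> 'z \<Rightarrow> real) \<Rightarrow> 'z \<Rightarrow> real" where
  "flow_out G z = (\<Sum>w\<in>UNIV. G z w)"

definition flow_in :: "('z::finite \<Rightarrow> 'z \<Rightarrow> real) \<Rightarrow> 'z \<Rightarrow> real" where
  "flow_in G z = (\<Sum>w\<in>UNIV. G w z)"

(* G z w plays the role of P(Z_t = z, Z_(t+1) = w) for a Markovian coupling (Z_t) whose law at
   every time couples nuX and nuY. *)
definition coupling_flow ::
  "('x::finite \<Rightarrow> 'x pmf) \<Rightarrow> 'x pmf \<Rightarrow> ('y::finite \<Rightarrow> 'y pmf) \<Rightarrow> 'y pmf
   \<Rightarrow> ('x \<times> 'y \<Rightarrow> 'x \<times> 'y \<Rightarrow> real) \<Rightarrow> bool" where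
  "coupling_flow mX nuX mY nuY G \<longleftrightarrow>
     (\<forall>z w. 0 \<le> G z w) \<and>
     (\<forall>x y x'. (\<Sum>y'\<in>UNIV. G (x, y) (x', y')) = flow_out G (x, y) * pmf (mX x) x') \<and>
     (\<forall>x y y'. (\<Sum>x'\<in>UNIV. G (x, y) (x', y')) = flow_out G (x, y) * pmf (mY y) y') \<and>
     (\<forall>x. (\<Sum>y\<in>UNIV. flow_out G (x, y)) = pmf nuX x) \<and>
     (\<forall>y. (\<Sum>x\<in>UNIV. flow_out G (x, y)) = pmf nuY y)"

lemma coupling_flow_nonneg: "coupling_flow mX nuX mY nuY G \<Longrightarrow> 0 \<le> G z w"
  unfolding coupling_flow_def by blast

lemma flow_out_mean:
  "flow_out (\<lambda>z w. (\<Sum>i\<in>I. F i z w) / c) z = (\<Sum>i\<in>I. flow_out (F i) z) / c"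
  by (simp add: flow_out_def sum_divide_distrib[symmetric] sum.swap[of _ I])

lemma flow_in_mean:
  "flow_in (\<lambda>z w. (\<Sum>i\<in>I. F i z w) / c) z = (\<Sum>i\<in>I. flow_in (F i) z) / c"
  by (simp add: flow_in_def sum_divide_distrib[symmetric] sum.swap[of _ I])

lemma coupling_flow_mean:
  assumes "finite I" "I \<noteq> {}" "\<And>i. i \<in> I \<Longrightarrow> coupling_flow mX nuX mY nuY (F i)"
  shows "coupling_flow mX nuX mY nuY (\<lambda>z w. (\<Sum>i\<in>I. F i z w) / card I)"
proof -
  have F: "coupling_flow mX nuX mY nuY (F i)" if "i \<in> I" for i
    using assms(3) that .
  have nonneg: "0 \<le> (\<Sum>i\<in>I. F i z w) / card I" for z w
    using coupling_flow_nonneg[OF F] by (simp add: sum_nonneg)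
  have rows_X: "(\<Sum>y'\<in>UNIV. (\<Sum>i\<in>I. F i (x, y) (x', y')) / card I)
      = (\<Sum>i\<in>I. flow_out (F i) (x, y)) / card I * pmf (mX x) x'" for x y x'
    using F by (simp add: sum_divide_distrib[symmetric] sum.swap[of _ I] sum_distrib_right
        coupling_flow_def cong: sum.cong)
  have rows_Y: "(\<Sum>x'\<in>UNIV. (\<Sum>i\<in>I. F i (x, y) (x', y')) / card I)
      = (\<Sum>i\<in>I. flow_out (F i) (x, y)) / card I * pmf (mY y) y'" for x y y'
    using F by (simp add: sum_divide_distrib[symmetric] sum.swap[of _ I] sum_distrib_right
        coupling_flow_def cong: sum.cong)
  have marg_X: "(\<Sum>y\<in>UNIV. (\<Sum>i\<in>I. flow_out (F i) (x, y)) / card I) = pmf nuX x" for x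
    using F assms(1,2) by (simp add: sum_divide_distrib[symmetric] sum.swap[of _ I]
        coupling_flow_def cong: sum.cong)
  have marg_Y: "(\<Sum>x\<in>UNIV. (\<Sum>i\<in>I. flow_out (F i) (x, y)) / card I) = pmf nuY y" for y
    using F assms(1,2) by (simp add: sum_divide_distrib[symmetric] sum.swap[of _ I]
        coupling_flow_def cong: sum.cong)
  show ?thesis
    unfolding coupling_flow_def flow_out_mean
    using nonneg rows_X rows_Y marg_X marg_Y by simp
qed

lemma coupling_flow_le_1:
  assumes "coupling_flow mX nuX mY nuY G"
  shows "G z w \<le> 1"
proof -
  obtain x y where z: "z = (x, y)" by fastforce
  note nonneg = coupling_flow_nonneg[OF assms]
  have "G z w \<le> flow_out G (x, y)"
    unfolding flow_out_def z using nonneg by (intro member_le_sum) auto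
  also have "\<dots> \<le> (\<Sum>y'\<in>UNIV. flow_out G (x, y'))"
    unfolding flow_out_def using nonneg by (intro member_le_sum sum_nonneg) auto
  also have "\<dots> = pmf nuX x"
    using assms by (simp add: coupling_flow_def)
  finally show ?thesis
    using pmf_le_1 by (rule order.trans)
qed

lemma sum_flow_out_eq_1:
  assumes "coupling_flow mX nuX mY nuY G"
  shows "(\<Sum>z\<in>UNIV. flow_out G z) = 1"
proof -
  have "(\<Sum>z\<in>UNIV. flow_out G z) = (\<Sum>x\<in>UNIV. \<Sum>y\<in>UNIV. flow_out G (x, y))"
    by (simp add: sum.cartesian_product UNIV_Times_UNIV[symmetric] del: UNIV_Times_UNIV)
  also have "\<dots> = 1"
    using assms by (simp add: coupling_flow_def sum_pmf_eq_1)
  finally show ?thesis .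
qed

lemma tendsto_flow_out:
  assumes "\<And>w. ((\<lambda>k. G k z w) \<longlongrightarrow> H z w) F"
  shows "((\<lambda>k. flow_out (G k) z) \<longlongrightarrow> flow_out H z) F"
  unfolding flow_out_def by (intro tendsto_sum assms)

lemma tendsto_flow_in:
  assumes "\<And>w. ((\<lambda>k. G k w z) \<longlongrightarrow> H w z) F"
  shows "((\<lambda>k. flow_in (G k) z) \<longlongrightarrow> flow_in H z) F"
  unfolding flow_in_def by (intro tendsto_sum assms)

lemma coupling_flow_limit:
  assumes lim: "\<And>z w. (\<lambda>k. G k z w) \<longlonglongrightarrow> H z w"
    and flows: "\<And>k. coupling_flow mX nuX mY nuY (G k)"
  shows "coupling_flow mX nuX mY nuY H"
proof -
  have lim_out: "(\<lambda>k. flow_out (G k) z) \<longlonglongrightarrow> flow_out H z" for z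
    by (intro tendsto_flow_out lim)
  have nonneg: "0 \<le> H z w" for z w
    using coupling_flow_nonneg[OF flows] by (intro LIMSEQ_le_const[OF lim]) blast
  have rows_X: "(\<Sum>y'\<in>UNIV. H (x, y) (x', y')) = flow_out H (x, y) * pmf (mX x) x'" for x y x'
  proof (rule LIMSEQ_unique)
    show "(\<lambda>k. \<Sum>y'\<in>UNIV. G k (x, y) (x', y')) \<longlonglongrightarrow> (\<Sum>y'\<in>UNIV. H (x, y) (x', y'))"
      by (intro tendsto_sum lim)
    show "(\<lambda>k. \<Sum>y'\<in>UNIV. G k (x, y) (x', y')) \<longlonglongrightarrow> flow_out H (x, y) * pmf (mX x) x'"
      using flows by (simp add: coupling_flow_def tendsto_mult_right lim_out)
  qed
  have rows_Y: "(\<Sum>x'\<in>UNIV. H (x, y) (x', y')) = flow_out H (x, y) * pmf (mY y) y'" for x y y'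
  proof (rule LIMSEQ_unique)
    show "(\<lambda>k. \<Sum>x'\<in>UNIV. G k (x, y) (x', y')) \<longlonglongrightarrow> (\<Sum>x'\<in>UNIV. H (x, y) (x', y'))"
      by (intro tendsto_sum lim)
    show "(\<lambda>k. \<Sum>x'\<in>UNIV. G k (x, y) (x', y')) \<longlonglongrightarrow> flow_out H (x, y) * pmf (mY y) y'"
      using flows by (simp add: coupling_flow_def tendsto_mult_right lim_out)
  qed
  have marg_X: "(\<Sum>y\<in>UNIV. flow_out H (x, y)) = pmf nuX x" for x
  proof (rule LIMSEQ_unique)
    show "(\<lambda>k. \<Sum>y\<in>UNIV. flow_out (G k) (x, y)) \<longlonglongrightarrow> (\<Sum>y\<in>UNIV. flow_out H (x, y))"
      by (intro tendsto_sum lim_out)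
    show "(\<lambda>k. \<Sum>y\<in>UNIV. flow_out (G k) (x, y)) \<longlonglongrightarrow> pmf nuX x"
      using flows by (simp add: coupling_flow_def)
  qed
  have marg_Y: "(\<Sum>x\<in>UNIV. flow_out H (x, y)) = pmf nuY y" for y
  proof (rule LIMSEQ_unique)
    show "(\<lambda>k. \<Sum>x\<in>UNIV. flow_out (G k) (x, y)) \<longlonglongrightarrow> (\<Sum>x\<in>UNIV. flow_out H (x, y))"
      by (intro tendsto_sum lim_out)
    show "(\<lambda>k. \<Sum>x\<in>UNIV. flow_out (G k) (x, y)) \<longlonglongrightarrow> pmf nuY y"
      using flows by (simp add: coupling_flow_def)
  qed
  show ?thesis
    unfolding coupling_flow_def using nonneg rows_X rows_Y marg_X marg_Y by blast
qed

(* Off the support of the flow the kernel is irrelevant; the independent coupling only makes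
   it a coupling there as well. *)
definition flow_kernel ::
  "('x::finite \<times> 'y::finite \<Rightarrow> 'x \<times> 'y \<Rightarrow> real) \<Rightarrow> ('x \<Rightarrow> 'x pmf) \<Rightarrow> ('y \<Rightarrow> 'y pmf)
   \<Rightarrow> 'x \<times> 'y \<Rightarrow> ('x \<times> 'y) pmf" where
  "flow_kernel G mX mY z =
     (if 0 < flow_out G z then embed_pmf (\<lambda>w. G z w / flow_out G z)
      else pair_pmf (mX (fst z)) (mY (snd z)))"

lemma pmf_flow_kernel:
  assumes "\<And>w. 0 \<le> G z w" "0 < flow_out G z"
  shows "pmf (flow_kernel G mX mY z) w = G z w / flow_out G z"
proof -
  have "(\<Sum>w\<in>UNIV. G z w / flow_out G z) = 1"
    using assms(2) by (simp add: sum_divide_distrib[symmetric] flow_out_def)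
  then show ?thesis
    using assms by (simp add: flow_kernel_def pmf_embed_pmf_finite)
qed

lemma flow_out_mult_pmf_flow_kernel:
  assumes "\<And>w. 0 \<le> G z w"
  shows "flow_out G z * pmf (flow_kernel G mX mY z) w = G z w"
proof (cases "0 < flow_out G z")
  case True
  then show ?thesis using assms by (simp add: pmf_flow_kernel)
next
  case False
  then have "flow_out G z = 0"
    using assms by (simp add: flow_out_def sum_nonneg order.antisym)
  moreover have "G z w = 0"
    using \<open>flow_out G z = 0\<close> assms sum_nonneg_eq_0_iff[of UNIV "G z"]
    unfolding flow_out_def by (metis UNIV_I finite)
  ultimately show ?thesis by simp
qed

lemma flow_kernel_coupling:
  assumes "coupling_flow mX nuX mY nuY G"
  shows "flow_kernel G mX mY (x, y) \<in> couplings (mX x) (mY y)"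
proof (cases "0 < flow_out G (x, y)")
  case True
  note nonneg = coupling_flow_nonneg[OF assms]
  have "map_pmf fst (flow_kernel G mX mY (x, y)) = mX x"
    using assms True
    by (intro pmf_eqI) (simp add: pmf_map_fst_finite pmf_flow_kernel nonneg
        sum_divide_distrib[symmetric] coupling_flow_def)
  moreover have "map_pmf snd (flow_kernel G mX mY (x, y)) = mY y"
    using assms True
    by (intro pmf_eqI) (simp add: pmf_map_snd_finite pmf_flow_kernel nonneg
        sum_divide_distrib[symmetric] coupling_flow_def)
  ultimately show ?thesis by (simp add: couplings_def)
next
  case False
  then show ?thesis
    by (simp add: flow_kernel_def couplings_def map_fst_pair_pmf map_snd_pair_pmf)
qed

lemma pmf_embed_pmf_flow_out:
  assumes "coupling_flow mX nuX mY nuY G"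
  shows "pmf (embed_pmf (flow_out G)) z = flow_out G z"
  using coupling_flow_nonneg[OF assms] sum_flow_out_eq_1[OF assms]
  by (intro pmf_embed_pmf_finite) (simp_all add: flow_out_def sum_nonneg)

lemma stationary_markovian_coupling_flow_kernel:
  assumes flow: "coupling_flow mX nuX mY nuY G" and balanced: "flow_in G = flow_out G"
  shows "stationary_markovian_coupling mX nuX mY nuY (embed_pmf (flow_out G)) (flow_kernel G mX mY)"
proof -
  note pmf_pi0 = pmf_embed_pmf_flow_out[OF flow]
  have "map_pmf fst (embed_pmf (flow_out G)) = nuX" "map_pmf snd (embed_pmf (flow_out G)) = nuY"
    using flow by (auto intro!: pmf_eqI simp: pmf_map_fst_finite pmf_map_snd_finite pmf_pi0
        coupling_flow_def)
  moreover have "stationary (flow_kernel G mX mY) (embed_pmf (flow_out G))"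
    unfolding stationary_def
  proof (rule pmf_eqI)
    fix w
    have "pmf (bind_pmf (embed_pmf (flow_out G)) (flow_kernel G mX mY)) w = flow_in G w"
      by (simp add: pmf_bind_finite pmf_pi0 flow_out_mult_pmf_flow_kernel
          coupling_flow_nonneg[OF flow] flow_in_def)
    then show "pmf (bind_pmf (embed_pmf (flow_out G)) (flow_kernel G mX mY)) w
        = pmf (embed_pmf (flow_out G)) w"
      by (simp add: balanced pmf_pi0)
  qed
  ultimately show ?thesis
    using flow_kernel_coupling[OF flow]
    by (simp add: stationary_markovian_coupling_def markovian_coupling_def couplings_def)
qed

section \<open>Cesaro averages of a Markovian coupling\<close>

lemma map_fst_chain_law:
  assumes "stationary mX nuX" "markovian_coupling mX nuX mY nuY pi0 K"
  shows "map_pmf fst (chain_law pi0 K t) = nuX"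
proof (induction t)
  case 0
  then show ?case using assms(2) by (simp add: markovian_coupling_def couplings_def)
next
  case (Suc t)
  have "map_pmf fst (chain_law pi0 K (Suc t)) = bind_pmf (chain_law pi0 K t) (\<lambda>z. mX (fst z))"
    using assms(2) by (auto simp: map_bind_pmf markovian_coupling_def couplings_def
        intro!: bind_pmf_cong)
  also have "\<dots> = bind_pmf (map_pmf fst (chain_law pi0 K t)) mX"
    by (simp add: bind_map_pmf)
  finally show ?case
    using Suc assms(1) by (simp add: stationary_def)
qed

lemma map_snd_chain_law:
  assumes "stationary mY nuY" "markovian_coupling mX nuX mY nuY pi0 K"
  shows "map_pmf snd (chain_law pi0 K t) = nuY"
proof (induction t)
  case 0
  then show ?case using assms(2) by (simp add: markovian_coupling_def couplings_def)
next
  case (Suc t)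
  have "map_pmf snd (chain_law pi0 K (Suc t)) = bind_pmf (chain_law pi0 K t) (\<lambda>z. mY (snd z))"
    using assms(2) by (auto simp: map_bind_pmf markovian_coupling_def couplings_def
        intro!: bind_pmf_cong)
  also have "\<dots> = bind_pmf (map_pmf snd (chain_law pi0 K t)) mY"
    by (simp add: bind_map_pmf)
  finally show ?case
    using Suc assms(1) by (simp add: stationary_def)
qed

lemma coupling_flow_chain_step:
  fixes mX :: "'x::finite \<Rightarrow> 'x pmf" and mY :: "'y::finite \<Rightarrow> 'y pmf"
  assumes "stationary mX nuX" "stationary mY nuY" "markovian_coupling mX nuX mY nuY pi0 K"
  shows "coupling_flow mX nuX mY nuY (\<lambda>z w. pmf (chain_law pi0 K t) z * pmf (K t z) w)"
proof -
  let ?L = "chain_law pi0 K t"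
  have K: "K t (x, y) \<in> couplings (mX x) (mY y)" for x y
    using assms(3) by (simp add: markovian_coupling_def)
  have out: "flow_out (\<lambda>z w. pmf ?L z * pmf (K t z) w) z = pmf ?L z" for z
    by (simp add: flow_out_def sum_distrib_left[symmetric] sum_pmf_eq_1)
  have "(\<Sum>y'\<in>UNIV. pmf (K t (x, y)) (x', y')) = pmf (mX x) x'" for x y x'
    using K[of x y] by (simp add: pmf_map_fst_finite[symmetric] couplings_def)
  moreover have "(\<Sum>x'\<in>UNIV. pmf (K t (x, y)) (x', y')) = pmf (mY y) y'" for x y y'
    using K[of x y] by (simp add: pmf_map_snd_finite[symmetric] couplings_def)
  moreover have "(\<Sum>y\<in>UNIV. pmf ?L (x, y)) = pmf nuX x" for x
    using map_fst_chain_law[OF assms(1,3)] by (simp add: pmf_map_fst_finite[symmetric])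
  moreover have "(\<Sum>x\<in>UNIV. pmf ?L (x, y)) = pmf nuY y" for y
    using map_snd_chain_law[OF assms(2,3)] by (simp add: pmf_map_snd_finite[symmetric])
  ultimately show ?thesis
    by (simp add: coupling_flow_def out sum_distrib_left[symmetric])
qed

definition cesaro_flow :: "'z pmf \<Rightarrow> (nat \<Rightarrow> 'z \<Rightarrow> 'z pmf) \<Rightarrow> nat \<Rightarrow> 'z \<Rightarrow> 'z \<Rightarrow> real" where
  "cesaro_flow pi0 K n z w = (\<Sum>t\<le>n. pmf (chain_law pi0 K t) z * pmf (K t z) w) / real (Suc n)"

lemma coupling_flow_cesaro_flow:
  fixes mX :: "'x::finite \<Rightarrow> 'x pmf" and mY :: "'y::finite \<Rightarrow> 'y pmf"
  assumes "stationary mX nuX" "stationary mY nuY" "markovian_coupling mX nuX mY nuY pi0 K"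
  shows "coupling_flow mX nuX mY nuY (cesaro_flow pi0 K n)"
  using coupling_flow_mean[of "{..n}", OF _ _ coupling_flow_chain_step[OF assms]]
  by (simp add: cesaro_flow_def[abs_def])

lemma flow_out_cesaro_flow:
  "flow_out (cesaro_flow pi0 K n) z = (\<Sum>t\<le>n. pmf (chain_law pi0 K t) z) / real (Suc n)"
  unfolding cesaro_flow_def[abs_def] flow_out_mean
  by (simp add: flow_out_def sum_distrib_left[symmetric] sum_pmf_eq_1)

lemma flow_in_cesaro_flow:
  fixes pi0 :: "'z::finite pmf"
  shows "flow_in (cesaro_flow pi0 K n) z = (\<Sum>t\<le>n. pmf (chain_law pi0 K (Suc t)) z) / real (Suc n)"
  unfolding cesaro_flow_def[abs_def] flow_in_mean
  by (simp add: flow_in_def pmf_bind_finite)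

lemma cesaro_flow_balance_defect:
  fixes pi0 :: "'z::finite pmf"
  shows "\<bar>flow_in (cesaro_flow pi0 K n) z - flow_out (cesaro_flow pi0 K n) z\<bar> \<le> 1 / real (Suc n)"
proof -
  let ?P = "\<lambda>t. pmf (chain_law pi0 K t) z"
  have "flow_in (cesaro_flow pi0 K n) z - flow_out (cesaro_flow pi0 K n) z
      = (\<Sum>t<Suc n. ?P (Suc t) - ?P t) / real (Suc n)"
    unfolding flow_in_cesaro_flow flow_out_cesaro_flow
    by (simp add: lessThan_Suc_atMost sum_subtractf diff_divide_distrib)
  also have "\<dots> = (?P (Suc n) - ?P 0) / real (Suc n)"
    by (subst sum_lessThan_telescope) (rule refl)
  finally have defect: "flow_in (cesaro_flow pi0 K n) z - flow_out (cesaro_flow pi0 K n) z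
      = (?P (Suc n) - ?P 0) / real (Suc n)" .
  have "\<bar>?P (Suc n) - ?P 0\<bar> \<le> 1"
    using pmf_le_1[of "chain_law pi0 K (Suc n)" z] pmf_le_1[of "chain_law pi0 K 0" z]
      pmf_nonneg[of "chain_law pi0 K (Suc n)" z] pmf_nonneg[of "chain_law pi0 K 0" z]
    by linarith
  then show ?thesis
    unfolding defect by (simp add: divide_right_mono)
qed

lemma cesaro_flow_cost:
  fixes pi0 :: "'z::finite pmf"
  shows "(\<Sum>z\<in>UNIV. flow_out (cesaro_flow pi0 K n) z * c z)
    = (\<Sum>t\<le>n. measure_pmf.expectation (chain_law pi0 K t) c) / real (Suc n)"
  by (simp add: flow_out_cesaro_flow expectation_finite sum_divide_distrib[symmetric]
      sum_distrib_right sum.swap[of _ "{..n}"])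

section \<open>Zero-cost stationary couplings as limits\<close>

lemma bounded_seq_convergent_subseq:
  fixes w :: "nat \<Rightarrow> 'i::finite \<Rightarrow> real"
  assumes "\<And>n i. \<bar>w n i\<bar> \<le> B"
  obtains r l where "strict_mono r" "\<And>i. (\<lambda>n. w (r n) i) \<longlonglongrightarrow> l i"
proof -
  define v where "v n = (\<chi> i. w n i)" for n
  have "v n \<in> cbox (\<chi> i. - B) (\<chi> i. B)" for n
    using assms by (simp add: v_def mem_box_cart abs_le_iff) (meson minus_le_iff)
  then have "bounded (range v)"
    by (meson bounded_cbox bounded_subset image_subsetI)
  then obtain l r where "strict_mono r" "(v \<circ> r) \<longlonglongrightarrow> l"
    using bounded_imp_convergent_subsequence by blast
  then show ?thesis
    by (intro that[of r "\<lambda>i. l $ i"]) (auto dest: tendsto_vec_nth simp: v_def o_def)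
qed

lemma zero_cost_balanced_flow_limit:
  fixes c :: "'x::finite \<times> 'y::finite \<Rightarrow> real"
  assumes c_nonneg: "\<And>z. 0 \<le> c z"
    and flows: "\<And>n. coupling_flow mX nuX mY nuY (G n)"
    and defect: "\<And>n z. \<bar>flow_in (G n) z - flow_out (G n) z\<bar> \<le> 1 / real (Suc n)"
    and cost: "\<And>n. (\<Sum>z\<in>UNIV. flow_out (G n) z * c z) \<le> 1 / real (Suc n)"
  obtains H where "coupling_flow mX nuX mY nuY H" "flow_in H = flow_out H"
    "(\<Sum>z\<in>UNIV. flow_out H z * c z) = 0"
proof -
  note nonneg = coupling_flow_nonneg[OF flows]
  then have bounded: "\<bar>case_prod (G n) i\<bar> \<le> 1" for n i
    using coupling_flow_le_1[OF flows] by (cases i) simp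
  obtain r H' where r: "strict_mono r"
    and lim': "\<And>i. (\<lambda>k. case_prod (G (r k)) i) \<longlonglongrightarrow> H' i"
    using bounded_seq_convergent_subseq[of "\<lambda>n. case_prod (G n)", OF bounded] by blast
  define H where "H = curry H'"
  have lim: "(\<lambda>k. G (r k) z w) \<longlonglongrightarrow> H z w" for z w
    using lim'[of "(z, w)"] by (simp add: H_def)
  have vanish: "(\<lambda>k. 1 / real (Suc (r k))) \<longlonglongrightarrow> 0"
    using LIMSEQ_subseq_LIMSEQ[OF LIMSEQ_inverse_real_of_nat r] by (simp add: o_def inverse_eq_divide)
  have "flow_in H z - flow_out H z = 0" for z
  proof (rule LIMSEQ_unique)
    show "(\<lambda>k. flow_in (G (r k)) z - flow_out (G (r k)) z) \<longlonglongrightarrow> flow_in H z - flow_out H z"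
      by (intro tendsto_diff tendsto_flow_in tendsto_flow_out lim)
    show "(\<lambda>k. flow_in (G (r k)) z - flow_out (G (r k)) z) \<longlonglongrightarrow> 0"
      using defect by (intro Lim_null_comparison[OF _ vanish]) simp
  qed
  moreover have "(\<Sum>z\<in>UNIV. flow_out H z * c z) = 0"
  proof (rule LIMSEQ_unique)
    show "(\<lambda>k. \<Sum>z\<in>UNIV. flow_out (G (r k)) z * c z) \<longlonglongrightarrow> (\<Sum>z\<in>UNIV. flow_out H z * c z)"
      by (intro tendsto_sum tendsto_mult_right tendsto_flow_out lim)
    have "0 \<le> flow_out (G n) z" for n z
      unfolding flow_out_def using nonneg by (simp add: sum_nonneg)
    then show "(\<lambda>k. \<Sum>z\<in>UNIV. flow_out (G (r k)) z * c z) \<longlonglongrightarrow> 0"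
      using cost c_nonneg by (intro Lim_null_comparison[OF _ vanish]) (simp add: sum_nonneg)
  qed
  ultimately show ?thesis
    using that[OF coupling_flow_limit[OF lim flows]] by (simp add: fun_eq_iff)
qed

lemma markovian_coupling_cost_le_up_to:
  fixes c :: "'x::finite \<times> 'y::finite \<Rightarrow> real"
  assumes c_nonneg: "\<And>z. 0 \<le> c z" and p_pos: "\<And>t. 0 < pmf p t"
    and approx: "\<And>\<epsilon>. 0 < \<epsilon> \<Longrightarrow> \<exists>pi0 K. markovian_coupling mX nuX mY nuY pi0 K \<and>
        measure_pmf.expectation (bind_pmf p (chain_law pi0 K)) c < \<epsilon>"
  shows "\<exists>pi0 K. markovian_coupling mX nuX mY nuY pi0 K \<and>
    (\<forall>t\<le>n. measure_pmf.expectation (chain_law pi0 K t) c \<le> 1 / real (Suc n))"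
proof -
  define \<epsilon> where "\<epsilon> = Min (pmf p ` {..n}) / real (Suc n)"
  have "0 < \<epsilon>"
    using p_pos by (simp add: \<epsilon>_def)
  then obtain pi0 K where coupling: "markovian_coupling mX nuX mY nuY pi0 K"
    and small: "measure_pmf.expectation (bind_pmf p (chain_law pi0 K)) c < \<epsilon>"
    using approx by blast
  have "measure_pmf.expectation (chain_law pi0 K t) c \<le> 1 / real (Suc n)" if "t \<le> n" for t
  proof -
    have "pmf p t * measure_pmf.expectation (chain_law pi0 K t) c < \<epsilon>"
      using expectation_mult_le_expectation_bind[OF c_nonneg] small by (rule le_less_trans)
    also have "\<epsilon> \<le> pmf p t * (1 / real (Suc n))"
      using that by (simp add: \<epsilon>_def divide_right_mono)
    finally show ?thesis
      using mult_less_cancel_left_pos[OF p_pos] by (meson less_imp_le)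
  qed
  then show ?thesis
    using coupling by blast
qed

lemma zero_cost_stationary_coupling:
  fixes mX :: "'x::finite \<Rightarrow> 'x pmf" and mY :: "'y::finite \<Rightarrow> 'y pmf"
    and c :: "'x \<times> 'y \<Rightarrow> real"
  assumes sX: "stationary mX nuX" and sY: "stationary mY nuY"
    and c_nonneg: "\<And>z. 0 \<le> c z" and p_pos: "\<And>t. 0 < pmf p t"
    and approx: "\<And>\<epsilon>. 0 < \<epsilon> \<Longrightarrow> \<exists>pi0 K. markovian_coupling mX nuX mY nuY pi0 K \<and>
        measure_pmf.expectation (bind_pmf p (chain_law pi0 K)) c < \<epsilon>"
  obtains pi0 K where "stationary_markovian_coupling mX nuX mY nuY pi0 K"
    "measure_pmf.expectation pi0 c = 0"
proof -
  obtain P K where couplings: "\<And>n. markovian_coupling mX nuX mY nuY (P n) (K n)"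
    and cheap: "\<And>n t. t \<le> n \<Longrightarrow> measure_pmf.expectation (chain_law (P n) (K n) t) c \<le> 1 / real (Suc n)"
    using markovian_coupling_cost_le_up_to[OF c_nonneg p_pos approx] by metis
  define G where "G n = cesaro_flow (P n) (K n) n" for n
  have flows: "coupling_flow mX nuX mY nuY (G n)" for n
    unfolding G_def by (rule coupling_flow_cesaro_flow[OF sX sY couplings])
  have defect: "\<bar>flow_in (G n) z - flow_out (G n) z\<bar> \<le> 1 / real (Suc n)" for n z
    unfolding G_def by (rule cesaro_flow_balance_defect)
  have cost: "(\<Sum>z\<in>UNIV. flow_out (G n) z * c z) \<le> 1 / real (Suc n)" for n
  proof -
    have "(\<Sum>t\<le>n. measure_pmf.expectation (chain_law (P n) (K n) t) c) \<le> (\<Sum>t\<le>n. 1 / real (Suc n))"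
      by (rule sum_mono) (use cheap in simp)
    then show ?thesis
      unfolding G_def cesaro_flow_cost by (simp add: divide_right_mono)
  qed
  obtain H where flow: "coupling_flow mX nuX mY nuY H" and balanced: "flow_in H = flow_out H"
    and zero_cost: "(\<Sum>z\<in>UNIV. flow_out H z * c z) = 0"
    using zero_cost_balanced_flow_limit[OF c_nonneg flows defect cost] by blast
  show ?thesis
  proof (rule that)
    show "stationary_markovian_coupling mX nuX mY nuY (embed_pmf (flow_out H)) (flow_kernel H mX mY)"
      by (rule stationary_markovian_coupling_flow_kernel[OF flow balanced])
    show "measure_pmf.expectation (embed_pmf (flow_out H)) c = 0"
      using zero_cost by (simp add: expectation_finite pmf_embed_pmf_flow_out[OF flow])
  qed
qed

section \<open>The transport distances\<close>

lemma chain_law_const_stationary: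
  assumes "stationary K pi0"
  shows "chain_law pi0 (\<lambda>_. K) t = pi0"
  using assms by (induction t) (simp_all add: stationary_def)

lemma stationary_markovian_coupling_pair_pmf:
  assumes "stationary mX nuX" "stationary mY nuY"
  shows "stationary_markovian_coupling mX nuX mY nuY (pair_pmf nuX nuY) (\<lambda>(x, y). pair_pmf (mX x) (mY y))"
  using assms
  by (simp add: stationary_markovian_coupling_def markovian_coupling_def couplings_def
      stationary_def bind_pair_pmf_pair_pmf map_fst_pair_pmf map_snd_pair_pmf)

lemma expectation_cost_nonneg:
  fixes C :: "'x \<Rightarrow> 'y \<Rightarrow> real"
  assumes "\<And>x y. 0 \<le> C x y"
  shows "0 \<le> measure_pmf.expectation M (\<lambda>(x, y). C x y)"
  by (intro integral_nonneg_AE AE_I2) (simp add: assms split: prod.splits)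

lemma d_OTC_nonneg:
  assumes "stationary mX nuX" "stationary mY nuY" "\<And>x y. 0 \<le> C x y"
  shows "0 \<le> d_OTC mX nuX mY nuY C"
  unfolding d_OTC_def
  using stationary_markovian_coupling_pair_pmf[OF assms(1,2)]
  by (intro cINF_greatest) (auto simp: expectation_cost_nonneg assms(3))

lemma d_OTM_nonneg:
  assumes "stationary mX nuX" "stationary mY nuY" "\<And>x y. 0 \<le> C x y"
  shows "0 \<le> d_OTM p mX nuX mY nuY C"
  unfolding d_OTM_def
  using stationary_markovian_coupling_pair_pmf[OF assms(1,2)]
  by (intro cINF_greatest)
     (auto simp: expectation_cost_nonneg assms(3) stationary_markovian_coupling_def)

lemma d_OTC_le_expectation:
  assumes "stationary_markovian_coupling mX nuX mY nuY pi0 K" "\<And>x y. 0 \<le> C x y"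
  shows "d_OTC mX nuX mY nuY C \<le> measure_pmf.expectation pi0 (\<lambda>(x, y). C x y)"
proof -
  have "bdd_below ((\<lambda>(pi0, K). measure_pmf.expectation pi0 (\<lambda>(x, y). C x y))
      ` {(pi0, K). stationary_markovian_coupling mX nuX mY nuY pi0 K})"
    by (intro bdd_belowI[of _ 0]) (auto simp: expectation_cost_nonneg assms(2))
  from cINF_lower[OF this, of "(pi0, K)"] show ?thesis
    using assms(1) by (simp add: d_OTC_def)
qed

lemma d_OTM_le_d_OTC:
  assumes "stationary mX nuX" "stationary mY nuY" "\<And>x y. 0 \<le> C x y"
  shows "d_OTM p mX nuX mY nuY C \<le> d_OTC mX nuX mY nuY C"
  unfolding d_OTM_def d_OTC_def
proof (rule cINF_mono)
  show "{(pi0, K). stationary_markovian_coupling mX nuX mY nuY pi0 K} \<noteq> {}"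
    using stationary_markovian_coupling_pair_pmf[OF assms(1,2)] by blast
  show "bdd_below ((\<lambda>(pi0, K). measure_pmf.expectation (bind_pmf p (chain_law pi0 K)) (\<lambda>(x, y). C x y))
      ` {(pi0, K). markovian_coupling mX nuX mY nuY pi0 K})"
    by (intro bdd_belowI[of _ 0]) (auto simp: expectation_cost_nonneg assms(3))
next
  fix m assume "m \<in> {(pi0, K). stationary_markovian_coupling mX nuX mY nuY pi0 K}"
  then obtain pi0 K where m: "m = (pi0, K)" and st: "stationary_markovian_coupling mX nuX mY nuY pi0 K"
    by blast
  then have "(pi0, \<lambda>_. K) \<in> {(pi0, K). markovian_coupling mX nuX mY nuY pi0 K}"
    by (simp add: stationary_markovian_coupling_def)
  moreover have "chain_law pi0 (\<lambda>_. K) = (\<lambda>_. pi0)"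
    using st by (simp add: stationary_markovian_coupling_def chain_law_const_stationary fun_eq_iff)
  ultimately show "\<exists>n\<in>{(pi0, K). markovian_coupling mX nuX mY nuY pi0 K}.
      (\<lambda>(pi0, K). measure_pmf.expectation (bind_pmf p (chain_law pi0 K)) (\<lambda>(x, y). C x y)) n
      \<le> (\<lambda>(pi0, K). measure_pmf.expectation pi0 (\<lambda>(x, y). C x y)) m"
    unfolding m by force
qed

lemma d_OTM_lessD:
  assumes "stationary mX nuX" "stationary mY nuY" "d_OTM p mX nuX mY nuY C < \<epsilon>"
  shows "\<exists>pi0 K. markovian_coupling mX nuX mY nuY pi0 K \<and>
    measure_pmf.expectation (bind_pmf p (chain_law pi0 K)) (\<lambda>(x, y). C x y) < \<epsilon>"
proof -
  have "{(pi0, K). markovian_coupling mX nuX mY nuY pi0 K} \<noteq> {}"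
    using stationary_markovian_coupling_pair_pmf[OF assms(1,2)]
    by (auto simp: stationary_markovian_coupling_def)
  then show ?thesis
    using cInf_lessD[OF _ assms(3)[unfolded d_OTM_def]] by auto
qed

theorem proposition8:
  fixes mX :: "'x::finite \<Rightarrow> 'x pmf" and nuX :: "'x pmf"
    and mY :: "'y::finite \<Rightarrow> 'y pmf" and nuY :: "'y pmf"
    and C :: "'x \<Rightarrow> 'y \<Rightarrow> real" and p :: "nat pmf"
  assumes "stationary mX nuX" and "stationary mY nuY"
    and "\<And>x y. C x y \<ge> 0"
    and "\<And>t. pmf p t > 0"
  shows "d_OTC mX nuX mY nuY C = 0 \<longleftrightarrow> d_OTM p mX nuX mY nuY C = 0"
proof
  assume "d_OTC mX nuX mY nuY C = 0"
  then show "d_OTM p mX nuX mY nuY C = 0"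
    using d_OTM_le_d_OTC[where C=C and p=p, OF assms(1-3)]
      d_OTM_nonneg[where C=C and p=p, OF assms(1-3)]
    by linarith
next
  assume "d_OTM p mX nuX mY nuY C = 0"
  then have approx: "\<exists>pi0 K. markovian_coupling mX nuX mY nuY pi0 K \<and>
      measure_pmf.expectation (bind_pmf p (chain_law pi0 K)) (\<lambda>(x, y). C x y) < \<epsilon>"
    if "0 < \<epsilon>" for \<epsilon>
    using d_OTM_lessD[OF assms(1,2)] that by simp
  have cost_nonneg: "0 \<le> (\<lambda>(x, y). C x y) z" for z
    using assms(3) by (simp split: prod.splits)
  obtain pi0 K where coupling: "stationary_markovian_coupling mX nuX mY nuY pi0 K"
    and zero_cost: "measure_pmf.expectation pi0 (\<lambda>(x, y). C x y) = 0"
    using zero_cost_stationary_coupling[OF assms(1,2) cost_nonneg assms(4) approx] by blast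
  have "d_OTC mX nuX mY nuY C \<le> 0"
    using d_OTC_le_expectation[where C=C, OF coupling assms(3)] zero_cost by simp
  then show "d_OTC mX nuX mY nuY C = 0"
    using d_OTC_nonneg[where C=C, OF assms(1-3)] by linarith
qed

end
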